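(* Let $G$ be a distance-regular graph with degree $k$, parameter $\lambda>0$, and least adjacency eigenvalue $s$. Then \[ \lambda + \frac{k}{\lambda} > \frac{k}{|s|}. \]
   Context: A connected graph is distance-regular if for any two vertices $u,v$ at distance $i$, the numbers of neighbors of $v$ at distance $i-1$, $i$, and $i+1$ from $u$ depend only on $i$. Here $k$ is the degree, $\lambda$ is the number of common neighbors of two adjacent vertices, and $s$ is the least eigenvalue of the adjacency matrix ($s<0$). *)

theory Defs
  imports "HOL-Analysis.Analysis"
begin

definition simple_graph :: "('a \<Rightarrow> 'a \<Rightarrow> bool) \<Rightarrow> bool" where
  "simple_graph E \<longleftrightarrow> (\<forall>u v. E u v \<longrightarrow> E v u) \<and> (\<forall>u. \<not> E u u)"

definition connected_graph :: "('a \<Rightarrow> 'a \<Rightarrow> bool) \<Rightarrow> bool" where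
  "connected_graph E \<longleftrightarrow> (\<forall>u v. \<exists>n. (E ^^ n) u v)"

definition gdist :: "('a \<Rightarrow> 'a \<Rightarrow> bool) \<Rightarrow> 'a \<Rightarrow> 'a \<Rightarrow> nat" where
  "gdist E u v = (LEAST n. (E ^^ n) u v)"

definition distance_regular :: "('a::finite \<Rightarrow> 'a \<Rightarrow> bool) \<Rightarrow> bool" where
  "distance_regular E \<longleftrightarrow> simple_graph E \<and> connected_graph E \<and>
    (\<forall>u v x y. gdist E u v = gdist E x y \<longrightarrow>
       (\<forall>j::int. j \<in> {-1, 0, 1} \<longrightarrow>
          card {w. E v w \<and> int (gdist E u w) = int (gdist E u v) + j}
        = card {w. E y w \<and> int (gdist E x w) = int (gdist E x y) + j}))"

definition adj_matrix :: "('a::finite \<Rightarrow> 'a \<Rightarrow> bool) \<Rightarrow> real^'a^'a" where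
  "adj_matrix E = (\<chi> i j. if E i j then 1 else 0)"

definition is_eigenvalue :: "real^'n^'n \<Rightarrow> real \<Rightarrow> bool" where
  "is_eigenvalue A t \<longleftrightarrow> (\<exists>x. x \<noteq> 0 \<and> A *v x = t *\<^sub>R x)"

definition least_eigenvalue :: "real^'n^'n \<Rightarrow> real \<Rightarrow> bool" where
  "least_eigenvalue A s \<longleftrightarrow> is_eigenvalue A s \<and> (\<forall>t. is_eigenvalue A t \<longrightarrow> s \<le> t)"

end

theory Submission
  imports Defs
begin

text \<open>Fix a vertex u with neighbourhood N(u) and test the adjacency matrix against
  x = a e_u - 1_{N(u)}. Since every neighbour of u has exactly \<lambda> neighbours inside N(u),
  the Rayleigh quotient of x is (k \<lambda> - 2 a k) / (a^2 + k), an upper bound for s.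
  For a = \<lambda> + k/\<lambda> this bound reads k/|s| < a, because a (a - \<lambda>) - k = (k/\<lambda>)^2 > 0.\<close>

lemma linear_coeff_eq_0_if_quadratic_nonneg:
  fixes b d :: real
  assumes nonneg: "\<And>t. 0 \<le> b * t + d * t\<^sup>2"
  shows "b = 0"
proof -
  have "d + 1 > 0"
    using nonneg[of 1] nonneg[of "-1"] by simp
  define t where "t = - b / (d + 1)"
  have "b * t + d * t\<^sup>2 = t * (b + d * t)"
    by (simp add: power2_eq_square algebra_simps)
  also have "b + d * t = b / (d + 1)"
    using \<open>d + 1 > 0\<close> by (simp add: t_def field_simps)
  also have "t * (b / (d + 1)) = - (b / (d + 1))\<^sup>2"
    by (simp add: t_def power2_eq_square)
  finally have "b * t + d * t\<^sup>2 = - (b / (d + 1))\<^sup>2" .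
  then show "b = 0"
    using nonneg[of t] \<open>d + 1 > 0\<close> by simp
qed

lemma symmetric_matrix_inner_swap:
  fixes A :: "real^'n^'n"
  assumes "transpose A = A"
  shows "y \<bullet> (A *v x) = x \<bullet> (A *v y)"
  by (metis assms dot_lmul_matrix inner_commute transpose_matrix_vector)

lemma psd_matrix_kernel:
  fixes B :: "real^'n^'n"
  assumes sym: "transpose B = B"
    and psd: "\<And>y. 0 \<le> y \<bullet> (B *v y)"
    and zero: "x \<bullet> (B *v x) = 0"
  shows "B *v x = 0"
proof -
  define w where "w = B *v x"
  have "0 \<le> 2 * (w \<bullet> w) * t + (w \<bullet> (B *v w)) * t\<^sup>2" for t
  proof -
    have "0 \<le> (x + t *\<^sub>R w) \<bullet> (B *v (x + t *\<^sub>R w))"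
      by (rule psd)
    also have "\<dots> = 2 * (w \<bullet> w) * t + (w \<bullet> (B *v w)) * t\<^sup>2"
      using zero symmetric_matrix_inner_swap[OF sym, of x w]
      by (simp add: w_def algebra_simps inner_add_left inner_add_right power2_eq_square inner_commute)
    finally show ?thesis .
  qed
  then have "2 * (w \<bullet> w) = 0"
    by (rule linear_coeff_eq_0_if_quadratic_nonneg)
  then show ?thesis by (simp add: w_def)
qed

text \<open>A minimiser x of the quadratic form on the unit sphere is an eigenvector: subtracting
  its value m turns A into a positive semidefinite matrix whose form vanishes at x.\<close>

lemma symmetric_matrix_eigenvalue_below_Rayleigh:
  fixes A :: "real^'n^'n"
  assumes sym: "transpose A = A"
  shows "\<exists>m. is_eigenvalue A m \<and> (\<forall>y. m * (y \<bullet> y) \<le> y \<bullet> (A *v y))"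
proof -
  define q where "q y = y \<bullet> (A *v y)" for y
  have "continuous_on (sphere 0 1) q"
    unfolding q_def by (intro continuous_intros)
  then obtain x where x: "x \<in> sphere 0 1" and min: "\<And>y. y \<in> sphere 0 1 \<Longrightarrow> q x \<le> q y"
    using continuous_attains_inf[OF compact_sphere, of 0 1 q] by auto
  define m where "m = q x"
  have Rayleigh: "m * (y \<bullet> y) \<le> q y" for y
  proof (cases "y = 0")
    case False
    have "m \<le> q ((1 / norm y) *\<^sub>R y)"
      using False unfolding m_def by (intro min) simp
    also have "\<dots> = q y / (norm y)\<^sup>2"
      by (simp add: q_def matrix_vector_mult_scaleR power2_eq_square)
    finally show ?thesis
      using False by (simp add: field_simps dot_square_norm)
  qed (simp add: q_def)
  define B where "B = A - m *\<^sub>R mat 1"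
  have B: "B *v y = A *v y - m *\<^sub>R y" for y
    by (simp add: B_def matrix_vector_mult_diff_rdistrib flip: scaleR_matrix_vector_assoc)
  have "transpose B = B"
    using sym by (auto simp: B_def transpose_def vec_eq_iff mat_def)
  moreover have "0 \<le> y \<bullet> (B *v y)" for y
    using Rayleigh[of y] by (simp add: B q_def inner_diff_right)
  moreover have "x \<bullet> (B *v x) = 0"
    using x by (simp add: B m_def q_def inner_diff_right dot_square_norm)
  ultimately have "B *v x = 0"
    by (rule psd_matrix_kernel)
  then have "is_eigenvalue A m"
    using x unfolding is_eigenvalue_def by (metis B eq_iff_diff_eq_0 norm_zero mem_sphere_0 zero_neq_one)
  with Rayleigh show ?thesis
    unfolding q_def by blast
qed

lemma least_eigenvalue_le_Rayleigh:
  fixes A :: "real^'n^'n"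
  assumes "transpose A = A" and "least_eigenvalue A s"
  shows "s * (y \<bullet> y) \<le> y \<bullet> (A *v y)"
proof -
  obtain m where "is_eigenvalue A m" and "m * (y \<bullet> y) \<le> y \<bullet> (A *v y)"
    using symmetric_matrix_eigenvalue_below_Rayleigh[OF assms(1)] by blast
  moreover have "s \<le> m"
    using assms(2) \<open>is_eigenvalue A m\<close> unfolding least_eigenvalue_def by blast
  ultimately show ?thesis
    by (meson inner_ge_zero mult_right_mono order_trans)
qed

lemma transpose_adj_matrix:
  assumes "simple_graph E"
  shows "transpose (adj_matrix E) = adj_matrix E"
  using assms unfolding simple_graph_def by (auto simp: transpose_def adj_matrix_def vec_eq_iff)

definition local_test_vector :: "('a::finite \<Rightarrow> 'a \<Rightarrow> bool) \<Rightarrow> 'a \<Rightarrow> real \<Rightarrow> real^'a" where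
  "local_test_vector E u a = (\<chi> i. (if i = u then a else 0) - (if E u i then 1 else 0))"

lemma sum_indicator_card:
  "(\<Sum>j\<in>UNIV. if P j then 1 else 0 :: real) = real (card {j::'a::finite. P j})"
  by (simp add: sum.If_cases)

lemma adj_matrix_mult_local_test_vector:
  fixes E :: "'a::finite \<Rightarrow> 'a \<Rightarrow> bool"
  shows "(adj_matrix E *v local_test_vector E u a) $ i
           = (if E i u then a else 0) - real (card {j. E i j \<and> E u j})"
proof -
  have "(adj_matrix E *v local_test_vector E u a) $ i
      = (\<Sum>j\<in>UNIV. (if E i j then 1 else 0) * ((if j = u then a else 0) - (if E u j then 1 else 0)))"
    by (simp add: matrix_vector_mult_def adj_matrix_def local_test_vector_def)
  also have "\<dots> = (\<Sum>j\<in>UNIV. if j = u then (if E i j then a else 0) else 0)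
                  - (\<Sum>j\<in>UNIV. if E i j \<and> E u j then 1 else 0)"
    by (simp only: sum_subtractf[symmetric]) (rule sum.cong, auto)
  finally show ?thesis
    by (simp add: sum_indicator_card)
qed

lemma inner_local_test_vector_self:
  assumes "simple_graph E"
  shows "local_test_vector E u a \<bullet> local_test_vector E u a = a\<^sup>2 + real (card {w. E u w})"
proof -
  have "\<not> E u u"
    using assms unfolding simple_graph_def by blast
  then have "local_test_vector E u a \<bullet> local_test_vector E u a
      = (\<Sum>i\<in>UNIV. (if i = u then a\<^sup>2 else 0) + (if E u i then 1 else 0))"
    by (auto simp: inner_vec_def local_test_vector_def power2_eq_square intro!: sum.cong)
  then show ?thesis
    by (simp add: sum.distrib sum_indicator_card)
qed

lemma quadratic_form_local_test_vector:
  fixes E :: "'a::finite \<Rightarrow> 'a \<Rightarrow> bool"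
  assumes "simple_graph E"
    and regular: "\<forall>v. card {w. E v w} = k"
    and "\<forall>u v. E u v \<longrightarrow> card {w. E u w \<and> E v w} = lam"
  shows "local_test_vector E u a \<bullet> (adj_matrix E *v local_test_vector E u a)
           = real k * real lam - 2 * a * real k"
proof -
  let ?x = "local_test_vector E u a"
  let ?y = "adj_matrix E *v ?x"
  have y_u: "?y $ u = - real k"
    using assms adj_matrix_mult_local_test_vector[of E u a u]
    unfolding simple_graph_def by simp
  have y_nbr: "?y $ i = a - real lam" if "E u i" for i
  proof -
    have "{j. E i j \<and> E u j} = {w. E u w \<and> E i w}" by auto
    then show ?thesis
      using assms that adj_matrix_mult_local_test_vector[of E u a i]
      unfolding simple_graph_def by simp
  qed
  have "?x \<bullet> ?y = (\<Sum>i\<in>UNIV. (if i = u then a * ?y $ i else 0) - (if E u i then ?y $ i else 0))"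
    by (auto simp: inner_vec_def local_test_vector_def left_diff_distrib intro!: sum.cong)
  also have "\<dots> = a * ?y $ u - (\<Sum>i\<in>{i. E u i}. a - real lam)"
    by (simp add: sum_subtractf sum.If_cases y_nbr)
  also have "\<dots> = real k * real lam - 2 * a * real k"
    using regular y_u by (simp add: algebra_simps)
  finally show ?thesis .
qed

lemma Rayleigh_bound_imp_div_abs_less:
  fixes K L s :: real
  defines "a \<equiv> L + K / L"
  assumes "L > 0" and "K \<ge> 0"
    and Rayleigh: "s * (a\<^sup>2 + K) \<le> K * L - 2 * a * K"
  shows "K / \<bar>s\<bar> < a"
proof (cases "K = 0")
  case True
  then show ?thesis using \<open>L > 0\<close> by (simp add: a_def)
next
  case False
  then have "K > 0" using \<open>K \<ge> 0\<close> by simp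
  have "a > 0" "a\<^sup>2 + K > 0"
    using \<open>K > 0\<close> \<open>L > 0\<close> by (simp_all add: a_def add_nonneg_pos)
  have "K * L - 2 * a * K = - K * (L + 2 * (K / L))"
    by (simp add: a_def algebra_simps)
  also have "\<dots> < 0"
    using \<open>K > 0\<close> \<open>L > 0\<close> by (simp add: mult_pos_pos add_pos_nonneg)
  finally have "s < 0"
    using Rayleigh \<open>a\<^sup>2 + K > 0\<close> by (smt (verit) mult_nonneg_nonneg)
  have "a * (a - L) - K = (K / L)\<^sup>2"
    using \<open>L > 0\<close> by (simp add: a_def field_simps power2_eq_square)
  moreover have "a * (2 * a - L) = a\<^sup>2 + a * (a - L)"
    by (simp add: algebra_simps power2_eq_square)
  moreover have "(K / L)\<^sup>2 > 0"
    using \<open>K > 0\<close> \<open>L > 0\<close> by simp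
  ultimately have gap: "a\<^sup>2 + K < a * (2 * a - L)"
    by linarith
  have "K * (a\<^sup>2 + K) < K * (a * (2 * a - L))"
    using gap \<open>K > 0\<close> by simp
  also have "\<dots> = a * (2 * a * K - K * L)"
    by (simp add: algebra_simps)
  also have "\<dots> \<le> a * (- s * (a\<^sup>2 + K))"
    using Rayleigh \<open>a > 0\<close> by (intro mult_left_mono) auto
  also have "\<dots> = (a * - s) * (a\<^sup>2 + K)"
    by simp
  finally have "K < a * - s"
    using \<open>a\<^sup>2 + K > 0\<close> by (simp only: mult_less_cancel_right_pos)
  then have "K / - s < a"
    using \<open>s < 0\<close> by (subst pos_divide_less_eq) (auto simp: mult.commute)
  then show ?thesis
    using \<open>s < 0\<close> by simp
qed

theorem lemma13:
  fixes E :: "'a::finite \<Rightarrow> 'a \<Rightarrow> bool" and k lam :: nat and s :: real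
  assumes "distance_regular E"
    and "\<forall>v. card {w. E v w} = k"
    and "\<forall>u v. E u v \<longrightarrow> card {w. E u w \<and> E v w} = lam"
    and "lam > 0"
    and "least_eigenvalue (adj_matrix E) s"
  shows "real lam + real k / real lam > real k / \<bar>s\<bar>"
proof -
  fix u :: 'a
  define a where "a = real lam + real k / real lam"
  let ?x = "local_test_vector E u a"
  have "simple_graph E"
    using assms(1) unfolding distance_regular_def by blast
  then have "s * (?x \<bullet> ?x) \<le> ?x \<bullet> (adj_matrix E *v ?x)"
    using assms(5) by (intro least_eigenvalue_le_Rayleigh transpose_adj_matrix)
  then have "s * (a\<^sup>2 + real k) \<le> real k * real lam - 2 * a * real k"
    using assms(2) quadratic_form_local_test_vector[OF \<open>simple_graph E\<close> assms(2,3)]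
    by (simp add: inner_local_test_vector_self[OF \<open>simple_graph E\<close>])
  then show ?thesis
    using assms(4) Rayleigh_bound_imp_div_abs_less[of "real lam" "real k" s] by (simp add: a_def)
qed

end
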